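(* Let $q\in[-1,1]$. For an analytic function $f$ of $N$ variables define \[ \mathcal{D}^{U(N),q}_k(f)(u_1,\dots,u_N)=\Big(\prod_{i<j}\frac1{u_i-u_j}\Big)\sum_{i=1}^Nu_i^{1-q}\partial_i\Big[(u_i\partial_i)^{k-1}\Big(\prod_{i<j}(u_i-u_j)\,f(u_1,\dots,u_N)\Big)\Big]. \] Then for every $\lambda\in\hat U(N)$ and $k\in\mathbb{N}$, \[ \frac1{\chi^\lambda(1^N)}\,\mathcal{D}^{U(N),q}_k\chi^\lambda(u_1,\dots,u_N)\Big|_{u_1=\dots=u_N=1}=N^{k+1}\int_{\mathbb{R}}t^k\,m_{N,PP(q)}[\lambda](dt). \]
   Context: A signature of length $N$ is $\lambda=(\lambda_1\ge\dots\ge\lambda_N)\in\mathbb{Z}^N$; $\hat U(N)$ is the set of such signatures. $\chi^{\lambda}(u_1,\dots,u_N)=\det(u_i^{\lambda_j+N-j})_{i,j}/\prod_{i<j}(u_i-u_j)$ is the rational Schur function, $1^N=(1,\dots,1)$, $\partial_i=\partial/\partial u_i$, and $(u_i\partial_i)g:=u_i\partial_ig$. The $q$-deformed Perelomov–Popov measure is \[ m_{N,PP(q)}[\lambda]=\frac1N\sum_{i=1}^N\Big(\prod_{j\ne i}\frac{(\lambda_i-i)-(\lambda_j-j)-q}{(\lambda_i-i)-(\lambda_j-j)}\Big)\delta\Big(\frac{\lambda_i+N-i}{N}\Big). \] *)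

theory Defs
  imports "HOL-Analysis.Analysis"
begin

text \<open>Points of the N-dimensional domain are functions u :: nat => real; only the
  coordinates u 0, ..., u (N-1) are used (0-based indexing).\<close>

definition is_signature :: "nat \<Rightarrow> (nat \<Rightarrow> int) \<Rightarrow> bool" where
  "is_signature N lam \<longleftrightarrow> (\<forall>i j. i \<le> j \<and> j < N \<longrightarrow> lam j \<le> lam i)"

definition det_nat :: "nat \<Rightarrow> (nat \<Rightarrow> nat \<Rightarrow> real) \<Rightarrow> real" where
  "det_nat N a = (\<Sum>p\<in>{p. p permutes {..<N}}. of_int (sign p) * (\<Prod>i<N. a i (p i)))"

definition vdm :: "nat \<Rightarrow> (nat \<Rightarrow> real) \<Rightarrow> real" where
  "vdm N u = (\<Prod>j<N. \<Prod>i<j. (u i - u j))"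

text \<open>Rational Schur function chi^lam(u) = det(u_i^(lam_j+N-j)) / prod_{i<j}(u_i-u_j)
  (1-based exponent lam_j + N - j becomes lam j + N - 1 - j with 0-based j).\<close>
definition schur :: "nat \<Rightarrow> (nat \<Rightarrow> int) \<Rightarrow> (nat \<Rightarrow> real) \<Rightarrow> real" where
  "schur N lam u = det_nat N (\<lambda>i j. u i powi (lam j + int N - 1 - int j)) / vdm N u"

definition partial :: "nat \<Rightarrow> ((nat \<Rightarrow> real) \<Rightarrow> real) \<Rightarrow> (nat \<Rightarrow> real) \<Rightarrow> real" where
  "partial i F u = deriv (\<lambda>t. F (u(i := t))) (u i)"

definition euler_op :: "nat \<Rightarrow> ((nat \<Rightarrow> real) \<Rightarrow> real) \<Rightarrow> (nat \<Rightarrow> real) \<Rightarrow> real" where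
  "euler_op i F = (\<lambda>u. u i * partial i F u)"

definition D_op :: "nat \<Rightarrow> real \<Rightarrow> nat \<Rightarrow> ((nat \<Rightarrow> real) \<Rightarrow> real) \<Rightarrow> (nat \<Rightarrow> real) \<Rightarrow> real" where
  "D_op N q k f u = (1 / vdm N u) *
     (\<Sum>i<N. u i powr (1 - q) *
        partial i ((euler_op i ^^ (k - 1)) (\<lambda>v. vdm N v * f v)) u)"

text \<open>Open domain of points with positive pairwise distinct coordinates; the value
  "at u_1 = ... = u_N = 1" is the limit at the all-ones point within this domain
  (coordinates with index >= N are frozen at 1).\<close>
definition gen_dom :: "nat \<Rightarrow> (nat \<Rightarrow> real) set" where
  "gen_dom N = {u. (\<forall>i<N. 0 < u i) \<and> (\<forall>i\<ge>N. u i = 1) \<and> (\<forall>i<N. \<forall>j<N. i \<noteq> j \<longrightarrow> u i \<noteq> u j)}"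

definition pp_weight :: "nat \<Rightarrow> real \<Rightarrow> (nat \<Rightarrow> int) \<Rightarrow> nat \<Rightarrow> real" where
  "pp_weight N q lam i =
     (\<Prod>j\<in>{..<N} - {i}.
        (real_of_int ((lam i - int i) - (lam j - int j)) - q) /
        real_of_int ((lam i - int i) - (lam j - int j)))"

text \<open>Location of the atom with index i: (lam_i + N - i)/N in 1-based indexing.\<close>
definition pp_atom :: "nat \<Rightarrow> (nat \<Rightarrow> int) \<Rightarrow> nat \<Rightarrow> real" where
  "pp_atom N lam i = real_of_int (lam i + int N - 1 - int i) / real N"

text \<open>Integral of t^k against the (signed, finitely supported) measure
  m_{N,PP(q)}[lam] = (1/N) sum_i w_i delta(x_i).\<close>
definition pp_moment :: "nat \<Rightarrow> real \<Rightarrow> (nat \<Rightarrow> int) \<Rightarrow> nat \<Rightarrow> real" where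
  "pp_moment N q lam k = (1 / real N) * (\<Sum>i<N. pp_weight N q lam i * pp_atom N lam i ^ k)"

end

theory Submission
  imports Defs "HOL-Computational_Algebra.Polynomial" "Jordan_Normal_Form.Determinant"
begin

text \<open>Clearing the Vandermonde denominator, the operator acts on the alternant
  \<open>det (u a powr e b)\<close>, \<open>e b = lam b + N - 1 - b\<close>, one row at a time; regrouping the rows
  by columns turns the result into a sum over \<open>b\<close> of alternants in which column \<open>b\<close> is
  replaced by \<open>e b ^ k * u powr (e b - q)\<close>.

  When all variables merge at \<open>1\<close>, an alternant of column functions \<open>f c\<close> divided by the
  Vandermonde product tends to \<open>det (f c^(a) (1) / a!)\<close>: Newton's interpolation formula
  factors out the Vandermonde product, and the mean value theorem for divided differences
  gives the limit of each entry. For \<open>f c = u powr s\<close> the entries are the values at \<open>s\<close> of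
  the polynomials \<open>s (s - 1) \<cdots> (s - a + 1) / a!\<close> of degree \<open>a < N\<close>. By Lagrange interpolation at
  the distinct nodes \<open>e c\<close> and Cramer's rule, moving column \<open>b\<close> from \<open>e b\<close> to \<open>e b - q\<close>
  multiplies the determinant by the Lagrange basis value
  \<open>\<Prod>j\<noteq>b. (e b - e j - q) / (e b - e j)\<close>, which is the weight of the atom \<open>b\<close> of the
  Perelomov-Popov measure.\<close>

section \<open>Divided differences\<close>

fun divdiff :: "(real \<Rightarrow> real) \<Rightarrow> (nat \<Rightarrow> real) \<Rightarrow> nat \<Rightarrow> real \<Rightarrow> real" where
  "divdiff g x 0 y = g y"
| "divdiff g x (Suc n) y = (divdiff g x n y - divdiff g x n (x n)) / (y - x n)"

text \<open>\<open>divdiff g x n (x n)\<close> is the divided difference \<open>g[x 0, \<dots>, x n]\<close>.\<close>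

lemma divdiff_step: "divdiff g x n y = divdiff g x n (x n) + (y - x n) * divdiff g x (Suc n) y"
  by (cases "y = x n") simp_all

declare divdiff.simps(2) [simp del]

lemma newton_expansion:
  "g y = (\<Sum>c<n. divdiff g x c (x c) * (\<Prod>m<c. y - x m)) + divdiff g x n y * (\<Prod>m<n. y - x m)"
proof (induction n)
  case 0
  then show ?case by simp
next
  case (Suc n)
  have "divdiff g x n y * (\<Prod>m<n. y - x m) =
      (divdiff g x n (x n) + (y - x n) * divdiff g x (Suc n) y) * (\<Prod>m<n. y - x m)"
    by (metis divdiff_step)
  also have "\<dots> = divdiff g x n (x n) * (\<Prod>m<n. y - x m) + divdiff g x (Suc n) y * (\<Prod>m<Suc n. y - x m)"
    by (simp add: algebra_simps)
  finally show ?case using Suc.IH by simp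
qed

definition newton_poly :: "(real \<Rightarrow> real) \<Rightarrow> (nat \<Rightarrow> real) \<Rightarrow> nat \<Rightarrow> real poly" where
  "newton_poly g x n = (\<Sum>c\<le>n. Polynomial.smult (divdiff g x c (x c)) (\<Prod>m<c. [:-x m, 1:]))"

lemma poly_newton_poly:
  "poly (newton_poly g x n) y = (\<Sum>c\<le>n. divdiff g x c (x c) * (\<Prod>m<c. y - x m))"
  by (simp add: newton_poly_def poly_sum poly_prod)

lemma newton_poly_interpolates:
  assumes "a \<le> n"
  shows "poly (newton_poly g x n) (x a) = g (x a)"
proof -
  have "(\<Prod>m<Suc n. x a - x m) = 0"
    using assms by (intro prod_zero) auto
  then show ?thesis
    using newton_expansion[of g "x a" x "Suc n"] by (simp add: poly_newton_poly lessThan_Suc_atMost)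
qed

lemma degree_prod_linear: "finite A \<Longrightarrow> degree (\<Prod>j\<in>A. [:-(x j::'a::idom), 1:]) = card A"
  by (subst degree_prod_eq_sum_degree) auto

lemma lead_coeff_prod_linear: "lead_coeff (\<Prod>j\<in>A. [:-(x j::'a::idom), 1:]) = 1"
  by (simp add: lead_coeff_prod)

lemma degree_newton_poly: "degree (newton_poly g x n) \<le> n"
  unfolding newton_poly_def
  by (intro degree_sum_le) (auto intro: order.trans[OF degree_smult_le] simp: degree_prod_linear)

lemma coeff_newton_poly: "coeff (newton_poly g x n) n = divdiff g x n (x n)"
proof -
  have "coeff (newton_poly g x n) n = (\<Sum>c\<le>n. divdiff g x c (x c) * coeff (\<Prod>m<c. [:-x m, 1:]) n)"
    by (simp add: newton_poly_def coeff_sum)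
  also have "\<dots> = (\<Sum>c\<in>{n}. divdiff g x c (x c) * coeff (\<Prod>m<c. [:-x m, 1:]) n)"
    by (rule sum.mono_neutral_right) (auto intro!: coeff_eq_0 simp: degree_prod_linear)
  also have "\<dots> = divdiff g x n (x n)"
    using lead_coeff_prod_linear[of x "{..<n}"] by (simp add: degree_prod_linear)
  finally show ?thesis .
qed

lemma divdiff_poly:
  assumes "inj_on x {..n}" and "degree P \<le> n"
  shows "divdiff (poly P) x n (x n) = coeff P n"
proof -
  have "newton_poly (poly P) x n = P"
    by (rule poly_eqI_degree[of "x ` {..n}"])
      (use assms degree_newton_poly[of "poly P" x n] in
        \<open>auto simp: newton_poly_interpolates card_image\<close>)
  then show ?thesis by (metis coeff_newton_poly)
qed

lemma higher_pderiv_degree_le: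
  fixes P :: "real poly"
  assumes "degree P \<le> n"
  shows "(pderiv ^^ n) P = [:fact n * coeff P n:]"
proof (rule poly_eqI)
  fix i
  show "coeff ((pderiv ^^ n) P) i = coeff [:fact n * coeff P n:] i"
  proof (cases i)
    case 0
    then show ?thesis by (simp add: coeff_higher_pderiv pochhammer_fact)
  next
    case (Suc j)
    then have "coeff P (i + n) = 0" using assms by (intro coeff_eq_0) auto
    then show ?thesis using Suc by (simp add: coeff_higher_pderiv)
  qed
qed

lemma rolle_iterated:
  fixes f :: "nat \<Rightarrow> real \<Rightarrow> real" and s :: "nat \<Rightarrow> real"
  assumes "\<forall>i<n. s i < s (Suc i)"
    and "\<forall>j<n. \<forall>t. s 0 \<le> t \<and> t \<le> s n \<longrightarrow> (f j has_real_derivative f (Suc j) t) (at t)"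
    and "\<forall>i\<le>n. f 0 (s i) = 0"
  shows "\<exists>\<xi>. s 0 \<le> \<xi> \<and> \<xi> \<le> s n \<and> f n \<xi> = 0"
  using assms
proof (induction n arbitrary: f s)
  case 0
  then show ?case by auto
next
  case (Suc n)
  have mono: "s i \<le> s j" if "i \<le> j" "j \<le> Suc n" for i j
    by (rule lift_Suc_mono_le_ivl[of "{..<Suc n}"]) (use Suc.prems(1) that in \<open>auto intro: less_imp_le\<close>)
  have "\<exists>t. s i < t \<and> t < s (Suc i) \<and> f 1 t = 0" if i: "i \<le> n" for i
  proof -
    have lt: "s i < s (Suc i)" using Suc.prems(1) i by auto
    have der: "(f 0 has_real_derivative f 1 t) (at t)" if "s i \<le> t" "t \<le> s (Suc i)" for t
      using Suc.prems(2) mono[of 0 i] mono[of "Suc i" "Suc n"] i that by auto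
    have cont: "continuous_on {s i..s (Suc i)} (f 0)"
      by (intro continuous_at_imp_continuous_on ballI DERIV_isCont) (use der in auto)
    have "\<And>x. s i < x \<Longrightarrow> x < s (Suc i) \<Longrightarrow> f 0 differentiable (at x)"
      using der real_differentiable_def less_imp_le by blast
    moreover have "f 0 (s i) = f 0 (s (Suc i))" using Suc.prems(3) i by auto
    ultimately obtain z where z: "s i < z" "z < s (Suc i)" "DERIV (f 0) z :> 0"
      using Rolle[OF lt _ cont] by blast
    with der have "f 1 z = 0" using DERIV_unique by force
    with z show ?thesis by blast
  qed
  then obtain t where t: "\<forall>i\<le>n. s i < t i \<and> t i < s (Suc i) \<and> f 1 (t i) = 0"
    by metis
  have "\<exists>\<xi>. t 0 \<le> \<xi> \<and> \<xi> \<le> t n \<and> (\<lambda>j. f (Suc j)) n \<xi> = 0"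
  proof (rule Suc.IH)
    show "\<forall>i<n. t i < t (Suc i)"
      using t by (meson Suc_leI less_imp_le_nat less_trans)
    show "\<forall>j<n. \<forall>x. t 0 \<le> x \<and> x \<le> t n \<longrightarrow> (f (Suc j) has_real_derivative f (Suc (Suc j)) x) (at x)"
      using Suc.prems(2) t[rule_format, of 0] t[rule_format, of n] by auto
    show "\<forall>i\<le>n. f (Suc 0) (t i) = 0" using t by auto
  qed
  then show ?case
    using t[rule_format, of 0] t[rule_format, of n] by (meson less_imp_le order.trans le0 order_refl)
qed

lemma divdiff_mean_value:
  fixes x :: "nat \<Rightarrow> real" and f :: "nat \<Rightarrow> real \<Rightarrow> real"
  assumes inj: "inj_on x {..n}"
    and der: "\<forall>j<n. \<forall>t\<in>{a..b}. (f j has_real_derivative f (Suc j) t) (at t)"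
    and nodes: "\<forall>i\<le>n. x i \<in> {a..b}"
  shows "\<exists>\<xi>\<in>{a..b}. divdiff (f 0) x n (x n) = f n \<xi> / fact n"
proof -
  define l where "l = sorted_list_of_set (x ` {..n})"
  have l_sorted: "sorted_wrt (<) l" and l_set: "set l = x ` {..n}" and l_length: "length l = Suc n"
    using card_image[OF inj] by (simp_all add: l_def strict_sorted_list_of_set)
  define s where "s i = l ! i" for i
  have s_inc: "\<forall>i<n. s i < s (Suc i)"
    using l_sorted l_length by (auto simp: s_def intro: sorted_wrt_nth_less)
  have s_node: "\<exists>c\<le>n. s i = x c" if "i \<le> n" for i
    using l_set l_length that unfolding s_def by (metis imageE atMost_iff le_imp_less_Suc nth_mem)
  then have s_ab: "s i \<in> {a..b}" if "i \<le> n" for i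
    using nodes that by fastforce
  define P where "P = newton_poly (f 0) x n"
  define \<phi> where "\<phi> j t = f j t - poly ((pderiv ^^ j) P) t" for j t
  have "\<exists>\<xi>. s 0 \<le> \<xi> \<and> \<xi> \<le> s n \<and> \<phi> n \<xi> = 0"
  proof (rule rolle_iterated[OF s_inc])
    show "\<forall>j<n. \<forall>t. s 0 \<le> t \<and> t \<le> s n \<longrightarrow> (\<phi> j has_real_derivative \<phi> (Suc j) t) (at t)"
      using der s_ab[of 0] s_ab[of n] unfolding \<phi>_def
      by (force intro!: derivative_eq_intros poly_DERIV[THEN DERIV_chain2])
    show "\<forall>i\<le>n. \<phi> 0 (s i) = 0"
      using s_node by (force simp: \<phi>_def P_def newton_poly_interpolates)
  qed
  then obtain \<xi> where \<xi>: "s 0 \<le> \<xi>" "\<xi> \<le> s n" "\<phi> n \<xi> = 0" by blast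
  have "(pderiv ^^ n) P = [:fact n * divdiff (f 0) x n (x n):]"
    unfolding P_def by (simp add: higher_pderiv_degree_le degree_newton_poly coeff_newton_poly)
  with \<xi> s_ab[of 0] s_ab[of n] show ?thesis
    by (intro bexI[of _ \<xi>]) (auto simp: \<phi>_def)
qed

section \<open>Derivatives of power functions\<close>

definition falling_fact :: "real \<Rightarrow> nat \<Rightarrow> real" where
  "falling_fact s j = (\<Prod>i<j. s - real i)"

definition falling_fact_poly :: "nat \<Rightarrow> real poly" where
  "falling_fact_poly j = (\<Prod>i<j. [:-real i, 1:])"

lemma poly_falling_fact_poly: "poly (falling_fact_poly j) s = falling_fact s j"
  by (simp add: falling_fact_poly_def falling_fact_def poly_prod)

lemma degree_falling_fact_poly: "degree (falling_fact_poly j) = j"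
  by (simp add: falling_fact_poly_def degree_prod_linear)

lemma coeff_falling_fact_poly: "coeff (falling_fact_poly j) j = 1"
  using lead_coeff_prod_linear[of real "{..<j}"]
  by (simp add: falling_fact_poly_def degree_prod_linear)

definition powr_deriv :: "real \<Rightarrow> real \<Rightarrow> nat \<Rightarrow> real \<Rightarrow> real" where
  "powr_deriv \<kappa> s j x = \<kappa> * falling_fact s j * x powr (s - real j)"

lemma powr_deriv_0: "powr_deriv \<kappa> s 0 x = \<kappa> * x powr s"
  by (simp add: powr_deriv_def falling_fact_def)

lemma has_real_derivative_powr_deriv:
  assumes "0 < x"
  shows "(powr_deriv \<kappa> s j has_real_derivative powr_deriv \<kappa> s (Suc j) x) (at x)"
proof -
  have "((\<lambda>x. \<kappa> * falling_fact s j * x powr (s - real j)) has_real_derivative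
          \<kappa> * falling_fact s j * ((s - real j) * x powr (s - real j - 1))) (at x)"
    by (intro DERIV_cmult has_real_derivative_powr assms)
  then show ?thesis
    by (simp add: powr_deriv_def[abs_def] falling_fact_def diff_diff_eq mult.assoc add.commute)
qed

lemma tendsto_divdiff_powr:
  assumes inj: "\<forall>u\<in>S. inj_on u {..a}"
  shows "((\<lambda>u. divdiff (powr_deriv \<kappa> s 0) u a (u a)) \<longlongrightarrow> powr_deriv \<kappa> s a 1 / fact a)
           (at (\<lambda>_. 1) within S)"
proof (unfold tendsto_iff, intro allI impI)
  fix \<epsilon> :: real
  assume "0 < \<epsilon>"
  have "(powr_deriv \<kappa> s a \<longlongrightarrow> powr_deriv \<kappa> s a 1) (at 1)"
    using DERIV_isCont[OF has_real_derivative_powr_deriv] by (simp add: isCont_def)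
  moreover have "0 < \<epsilon> * fact a" using \<open>0 < \<epsilon>\<close> by simp
  ultimately obtain \<delta> where "0 < \<delta>" and \<delta>:
    "\<And>y. y \<noteq> 1 \<and> norm (y - 1) < \<delta> \<Longrightarrow>
       norm (powr_deriv \<kappa> s a y - powr_deriv \<kappa> s a 1) < \<epsilon> * fact a"
    using LIM_D by blast
  define \<rho> where "\<rho> = min (\<delta> / 2) (1 / 2)"
  have \<rho>: "0 < \<rho>" "\<rho> < \<delta>" "\<rho> < 1" using \<open>0 < \<delta>\<close> by (auto simp: \<rho>_def)
  have near: "eventually (\<lambda>u. dist (u i) 1 < \<rho>) (at (\<lambda>_. 1) within S)" for i
  proof -
    have "isCont (\<lambda>u::nat \<Rightarrow> real. u i) (\<lambda>_. 1)"
      by (metis UNIV_I continuous_on_product_coordinates continuous_on_eq_continuous_at open_UNIV)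
    then have "((\<lambda>u. u i) \<longlongrightarrow> (1::real)) (at (\<lambda>_. 1) within S)"
      unfolding isCont_def by (rule tendsto_within_subset) simp
    then show ?thesis using \<rho>(1) by (auto simp: tendsto_iff)
  qed
  have "eventually (\<lambda>u. \<forall>i\<in>{..a}. dist (u i) 1 < \<rho>) (at (\<lambda>_. 1) within S)"
    by (rule eventually_ball_finite) (use near in auto)
  moreover have "eventually (\<lambda>u. u \<in> S) (at (\<lambda>_. 1) within S)"
    by (simp add: eventually_at_filter)
  ultimately show "eventually (\<lambda>u. dist (divdiff (powr_deriv \<kappa> s 0) u a (u a))
      (powr_deriv \<kappa> s a 1 / fact a) < \<epsilon>) (at (\<lambda>_. 1) within S)"
  proof eventually_elim
    case (elim u)
    have "\<forall>j<a. \<forall>t\<in>{1 - \<rho>..1 + \<rho>}. (powr_deriv \<kappa> s j has_real_derivative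
        powr_deriv \<kappa> s (Suc j) t) (at t)"
      using \<rho> by (auto intro!: has_real_derivative_powr_deriv)
    moreover have "\<forall>i\<le>a. u i \<in> {1 - \<rho>..1 + \<rho>}"
      using elim(1) by (force simp: dist_real_def abs_less_iff)
    ultimately obtain \<xi> where \<xi>: "\<xi> \<in> {1 - \<rho>..1 + \<rho>}"
      "divdiff (powr_deriv \<kappa> s 0) u a (u a) = powr_deriv \<kappa> s a \<xi> / fact a"
      using divdiff_mean_value[where f = "powr_deriv \<kappa> s" and x = u and n = a] inj elim(2) by blast
    have "\<bar>powr_deriv \<kappa> s a \<xi> - powr_deriv \<kappa> s a 1\<bar> < \<epsilon> * fact a"
    proof (cases "\<xi> = 1")
      case False
      with \<xi>(1) \<rho>(2) show ?thesis by (intro \<delta>[simplified]) auto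
    qed (use \<open>0 < \<epsilon>\<close> in simp)
    then have "\<bar>powr_deriv \<kappa> s a \<xi> - powr_deriv \<kappa> s a 1\<bar> / fact a < \<epsilon>"
      by (simp add: divide_less_eq)
    then show ?case
      by (simp add: \<xi>(2) dist_real_def diff_divide_distrib[symmetric])
  qed
qed

section \<open>Determinants\<close>

lemma det_nat_eq_det: "det_nat N A = det (mat N N (\<lambda>(i, j). A i j))"
proof -
  have "det (mat N N (\<lambda>(i, j). A i j)) =
      (\<Sum>p\<in>{p. p permutes {0..<N}}. signof p * (\<Prod>i=0..<N. mat N N (\<lambda>(i, j). A i j) $$ (i, p i)))"
    by (rule det_def') simp
  also have "\<dots> = det_nat N A"
    unfolding det_nat_def atLeast0LessThan
  proof (rule sum.cong[OF refl])
    fix p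
    assume "p \<in> {p. p permutes {..<N}}"
    then have "p i < N" if "i < N" for i
      using that permutes_in_image by fastforce
    then have "(\<Prod>i<N. mat N N (\<lambda>(i, j). A i j) $$ (i, p i)) = (\<Prod>i<N. A i (p i))"
      by (intro prod.cong) auto
    then show "signof p * (\<Prod>i<N. mat N N (\<lambda>(i, j). A i j) $$ (i, p i)) =
        of_int (sign p) * (\<Prod>i<N. A i (p i))"
      by simp
  qed
  finally show ?thesis by simp
qed

lemma det_nat_cong:
  "(\<And>i j. i < N \<Longrightarrow> j < N \<Longrightarrow> A i j = B i j) \<Longrightarrow> det_nat N A = det_nat N B"
  unfolding det_nat_def
  by (intro sum.cong refl arg_cong2[where f = "(*)"] prod.cong) (use permutes_in_image in fastforce)

lemma det_nat_transpose: "det_nat N (\<lambda>i j. A j i) = det_nat N A"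
proof -
  have "transpose_mat (mat N N (\<lambda>(i, j). A i j)) = mat N N (\<lambda>(i, j). A j i)"
    by (rule eq_matI) auto
  then show ?thesis
    using det_transpose[of "mat N N (\<lambda>(i, j). A i j)" N] by (simp add: det_nat_eq_det)
qed

lemma det_nat_lower_triangular:
  assumes "\<And>i j. i < j \<Longrightarrow> j < N \<Longrightarrow> A i j = 0"
  shows "det_nat N A = (\<Prod>i<N. A i i)"
proof -
  have "det (mat N N (\<lambda>(i, j). A i j)) = prod_list (diag_mat (mat N N (\<lambda>(i, j). A i j)))"
    by (rule det_lower_triangular[of N]) (auto simp: assms)
  also have "\<dots> = (\<Prod>i<N. A i i)"
    by (simp add: diag_mat_def prod.distinct_set_conv_list[symmetric] atLeast0LessThan)
  finally show ?thesis by (simp add: det_nat_eq_det)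
qed

lemma tendsto_det_nat:
  assumes "\<And>i j. i < N \<Longrightarrow> j < N \<Longrightarrow> ((\<lambda>x. A i j x) \<longlongrightarrow> L i j) F"
  shows "((\<lambda>x. det_nat N (\<lambda>i j. A i j x)) \<longlongrightarrow> det_nat N L) F"
  unfolding det_nat_def
  by (intro tendsto_sum tendsto_mult tendsto_const tendsto_prod)
    (use assms permutes_in_image in fastforce)

lemma det_nat_replace_row:
  assumes "i < N"
  shows "det_nat N (\<lambda>a b. if a = i then r b else A a b) =
     (\<Sum>p\<in>{p. p permutes {..<N}}. of_int (sign p) * (r (p i) * (\<Prod>a\<in>{..<N} - {i}. A a (p a))))"
  unfolding det_nat_def
proof (rule sum.cong[OF refl])
  fix p
  have "(\<Prod>a<N. if a = i then r (p a) else A a (p a)) =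
      r (p i) * (\<Prod>a\<in>{..<N} - {i}. if a = i then r (p a) else A a (p a))"
    using assms by (subst prod.remove[of _ i]) auto
  then show "of_int (sign p) * (\<Prod>a<N. if a = i then r (p a) else A a (p a)) =
      of_int (sign p) * (r (p i) * (\<Prod>a\<in>{..<N} - {i}. A a (p a)))"
    by simp
qed

lemma det_nat_scale_row:
  assumes "i < N"
  shows "c * det_nat N (\<lambda>a b. if a = i then r b else A a b) =
    det_nat N (\<lambda>a b. if a = i then c * r b else A a b)"
  unfolding det_nat_replace_row[OF assms] by (simp add: sum_distrib_left algebra_simps)

lemma has_real_derivative_det_nat_row:
  assumes "i < N" and "\<And>b. b < N \<Longrightarrow> (h b has_real_derivative h' b) (at t)"
  shows "((\<lambda>t. det_nat N (\<lambda>a b. if a = i then h b t else A a b)) has_real_derivative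
            det_nat N (\<lambda>a b. if a = i then h' b else A a b)) (at t)"
  unfolding det_nat_replace_row[OF assms(1)]
  by (intro DERIV_sum DERIV_cmult DERIV_cmult_right assms(2))
    (use assms(1) permutes_in_image in fastforce)

lemma sum_det_nat_replace_rows_eq_cols:
  "(\<Sum>i<N. det_nat N (\<lambda>a b. if a = i then B a b else A a b)) =
   (\<Sum>j<N. det_nat N (\<lambda>a b. if b = j then B a b else A a b))"
proof -
  have "(\<Sum>j<N. \<Prod>a<N. if p a = j then B a (p a) else A a (p a)) =
        (\<Sum>i<N. \<Prod>a<N. if a = i then B a (p a) else A a (p a))" if "p permutes {..<N}" for p
  proof -
    have bij: "bij_betw p {..<N} {..<N}" using that by (rule permutes_imp_bij)
    then have "p a = p i \<longleftrightarrow> a = i" if "i < N" "a < N" for i a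
      using that unfolding bij_betw_def inj_on_def by auto
    then show ?thesis
      using sum.reindex_bij_betw[OF bij, of "\<lambda>j. \<Prod>a<N. if p a = j then B a (p a) else A a (p a)"]
      by (auto intro!: sum.cong prod.cong)
  qed
  then show ?thesis
    unfolding det_nat_def by (subst (1 2) sum.swap) (simp add: sum_distrib_left[symmetric])
qed

lemma det_nat_replace_col_lincomb:
  assumes "j < N"
  shows "det_nat N (\<lambda>a b. if b = j then (\<Sum>c<N. \<alpha> c * A a c) else A a b) = \<alpha> j * det_nat N A"
proof -
  define M where "M = mat N N (\<lambda>(i, j). A i j)"
  define x where "x = vec N \<alpha>"
  have M: "M \<in> carrier_mat N N" and x: "x \<in> carrier_vec N" by (auto simp: M_def x_def)
  have "mat N N (\<lambda>(a, b). if b = j then (\<Sum>c<N. \<alpha> c * A a c) else A a b) = replace_col M (M *\<^sub>v x) j"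
    by (rule eq_matI)
      (auto simp: replace_col_def M_def x_def scalar_prod_def atLeast0LessThan mult.commute intro!: sum.cong)
  then show ?thesis
    using cramer_lemma_mat[OF M x assms] assms by (simp add: det_nat_eq_det M_def x_def)
qed

text \<open>Newton's interpolation formula factors \<open>(G c (u a))\<close> into the lower triangular matrix
  \<open>(\<Prod>m<c. u a - u m)\<close> and the matrix of divided differences.\<close>

lemma det_nat_newton:
  "det_nat N (\<lambda>a c. G c (u a)) =
     (\<Prod>a<N. \<Prod>m<a. u a - u m) * det_nat N (\<lambda>a c. divdiff (G c) u a (u a))"
proof -
  define L where "L = mat N N (\<lambda>(a, c). \<Prod>m<c. u a - u m)"
  define D where "D = mat N N (\<lambda>(c, c'). divdiff (G c') u c (u c))"
  have L: "L \<in> carrier_mat N N" and D: "D \<in> carrier_mat N N" by (auto simp: L_def D_def)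
  have "mat N N (\<lambda>(a, c). G c (u a)) = L * D"
  proof (rule eq_matI)
    fix a c
    assume "a < dim_row (L * D)" "c < dim_col (L * D)"
    then have a: "a < N" and c: "c < N" by (auto simp: L_def D_def)
    have "(\<Prod>m<N. u a - u m) = 0" using a by (intro prod_zero) auto
    then have "G c (u a) = (\<Sum>i<N. (\<Prod>m<i. u a - u m) * divdiff (G c) u i (u i))"
      using newton_expansion[of "G c" "u a" u N] by (simp add: mult.commute)
    then show "mat N N (\<lambda>(a, c). G c (u a)) $$ (a, c) = (L * D) $$ (a, c)"
      using a c by (simp add: L_def D_def scalar_prod_def atLeast0LessThan)
  qed (auto simp: L_def D_def)
  moreover have "det L = (\<Prod>a<N. \<Prod>m<a. u a - u m)"
    using det_nat_lower_triangular[of N "\<lambda>a c. \<Prod>m<c. u a - u m"]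
    by (auto simp: det_nat_eq_det L_def intro: prod_zero)
  ultimately have "det_nat N (\<lambda>a c. G c (u a)) = (\<Prod>a<N. \<Prod>m<a. u a - u m) * det D"
    by (simp add: det_nat_eq_det det_mult[OF L D])
  then show ?thesis by (simp add: det_nat_eq_det D_def)
qed

definition vdm_sign :: "nat \<Rightarrow> real" where
  "vdm_sign N = (\<Prod>a<N. (-1) ^ a)"

lemma vdm_sign_square: "vdm_sign N * vdm_sign N = 1"
  by (simp add: vdm_sign_def prod.distrib[symmetric] power_add[symmetric] mult_2[symmetric] power_mult)

lemma prod_diff_eq_vdm: "(\<Prod>a<N. \<Prod>m<a. u a - u m) = vdm_sign N * vdm N u"
proof -
  have "(\<Prod>m<a. u a - u m) = (-1) ^ a * (\<Prod>m<a. u m - u a)" for a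
    using prod.distrib[of "\<lambda>_. -1::real" "\<lambda>m. u m - u a" "{..<a}"] by simp
  then show ?thesis by (simp add: prod.distrib vdm_sign_def vdm_def)
qed

lemma vdm_nonzero: "inj_on u {..<N} \<Longrightarrow> vdm N u \<noteq> 0"
  unfolding vdm_def inj_on_def by (auto simp: prod_zero_iff)

lemma tendsto_alternant_quotient:
  assumes "\<forall>u\<in>S. inj_on u {..<N}"
  shows "((\<lambda>u. det_nat N (\<lambda>a c. \<kappa> c * u a powr s c) / vdm N u) \<longlongrightarrow>
     vdm_sign N * det_nat N (\<lambda>a c. powr_deriv (\<kappa> c) (s c) a 1 / fact a)) (at (\<lambda>_. 1) within S)"
proof -
  have "vdm_sign N * det_nat N (\<lambda>a c. divdiff (powr_deriv (\<kappa> c) (s c) 0) u a (u a)) =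
      det_nat N (\<lambda>a c. \<kappa> c * u a powr s c) / vdm N u" if "u \<in> S" for u
    using det_nat_newton[of N "\<lambda>c. powr_deriv (\<kappa> c) (s c) 0" u] vdm_sign_square[of N]
      vdm_nonzero[of u N] assms that
    by (simp add: prod_diff_eq_vdm powr_deriv_0 field_simps)
  then have "eventually (\<lambda>u. vdm_sign N * det_nat N (\<lambda>a c. divdiff (powr_deriv (\<kappa> c) (s c) 0) u a (u a)) =
      det_nat N (\<lambda>a c. \<kappa> c * u a powr s c) / vdm N u) (at (\<lambda>_. 1) within S)"
    by (auto simp: eventually_at_filter)
  moreover have "((\<lambda>u. vdm_sign N * det_nat N (\<lambda>a c. divdiff (powr_deriv (\<kappa> c) (s c) 0) u a (u a)))
      \<longlongrightarrow> vdm_sign N * det_nat N (\<lambda>a c. powr_deriv (\<kappa> c) (s c) a 1 / fact a)) (at (\<lambda>_. 1) within S)"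
    using assms by (intro tendsto_mult tendsto_const tendsto_det_nat tendsto_divdiff_powr)
      (auto intro: inj_on_subset)
  ultimately show ?thesis by (rule Lim_transform_eventually[rotated])
qed

section \<open>The operator applied to a Schur function\<close>

definition schur_exp :: "nat \<Rightarrow> (nat \<Rightarrow> int) \<Rightarrow> nat \<Rightarrow> real" where
  "schur_exp N lam b = real_of_int (lam b + int N - 1 - int b)"

definition alternant :: "nat \<Rightarrow> (nat \<Rightarrow> int) \<Rightarrow> (nat \<Rightarrow> real) \<Rightarrow> real" where
  "alternant N lam v = det_nat N (\<lambda>a b. v a powr schur_exp N lam b)"

lemma vdm_mult_schur:
  assumes "\<forall>a<N. 0 < v a"
  shows "vdm N v * schur N lam v = alternant N lam v"
proof -
  have "det_nat N (\<lambda>a b. v a powi (lam b + int N - 1 - int b)) = alternant N lam v"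
    unfolding alternant_def schur_exp_def
  proof (rule det_nat_cong)
    fix a b
    assume "a < N"
    with assms have "0 < v a" by simp
    then show "v a powi (lam b + int N - 1 - int b) = v a powr real_of_int (lam b + int N - 1 - int b)"
      using powr_real_of_int'[of "v a" "lam b + int N - 1 - int b"] by simp
  qed
  moreover have "det_nat N (\<lambda>a b. v a powi (lam b + int N - 1 - int b)) = 0" if "vdm N v = 0"
  proof -
    obtain j i where ji: "j < N" "i < j" "v i = v j"
      using \<open>vdm N v = 0\<close> unfolding vdm_def by (auto simp: prod_zero_iff)
    let ?M = "mat N N (\<lambda>(a, b). v a powi (lam b + int N - 1 - int b))"
    have "row ?M i = row ?M j"
      using ji by (auto intro!: eq_vecI)
    then have "det ?M = 0"
      using ji by (intro det_identical_rows[of _ N i j]) auto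
    then show ?thesis by (simp add: det_nat_eq_det)
  qed
  ultimately show ?thesis
    by (cases "vdm N v = 0") (auto simp: schur_def)
qed

lemma partial_det_nat_powr_row:
  assumes "i < N" and "\<forall>a<N. 0 < v a"
    and "\<forall>w. (\<forall>a<N. 0 < w a) \<longrightarrow>
      G w = det_nat N (\<lambda>a b. if a = i then \<kappa> b * w i powr s b else w a powr s b)"
  shows "partial i G v =
    det_nat N (\<lambda>a b. if a = i then \<kappa> b * (s b * v i powr (s b - 1)) else v a powr s b)"
proof -
  define H where "H t = det_nat N (\<lambda>a b. if a = i then \<kappa> b * t powr s b else v a powr s b)" for t
  have "eventually (\<lambda>t. t \<in> {0<..}) (nhds (v i))"
    using assms(1,2) by (intro eventually_nhds_in_open) auto
  then have "eventually (\<lambda>t. G (v(i := t)) = H t) (nhds (v i))"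
  proof eventually_elim
    case (elim t)
    then have "G (v(i := t)) =
        det_nat N (\<lambda>a b. if a = i then \<kappa> b * (v(i := t)) i powr s b else (v(i := t)) a powr s b)"
      using assms(2) by (intro assms(3)[rule_format]) auto
    also have "\<dots> = H t" unfolding H_def by (rule det_nat_cong) auto
    finally show ?case .
  qed
  moreover have "(H has_real_derivative
      det_nat N (\<lambda>a b. if a = i then \<kappa> b * (s b * v i powr (s b - 1)) else v a powr s b)) (at (v i))"
    unfolding H_def using assms(1,2)
    by (intro has_real_derivative_det_nat_row DERIV_cmult has_real_derivative_powr) auto
  ultimately show ?thesis
    unfolding partial_def using DERIV_imp_deriv deriv_cong_ev by fastforce
qed

lemma euler_op_iter_alternant:
  assumes "i < N" and "\<forall>w. (\<forall>a<N. 0 < w a) \<longrightarrow> G w = alternant N lam w"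
  shows "\<forall>w. (\<forall>a<N. 0 < w a) \<longrightarrow> (euler_op i ^^ j) G w =
     det_nat N (\<lambda>a b. if a = i then schur_exp N lam b ^ j * w i powr schur_exp N lam b
                       else w a powr schur_exp N lam b)"
proof (induction j)
  case 0
  show ?case
    using assms(2) unfolding alternant_def by (auto intro!: det_nat_cong)
next
  case (Suc j)
  show ?case
  proof (intro allI impI)
    fix w :: "nat \<Rightarrow> real"
    assume pos: "\<forall>a<N. 0 < w a"
    let ?e = "schur_exp N lam"
    have "(euler_op i ^^ Suc j) G w = w i * partial i ((euler_op i ^^ j) G) w"
      by (simp add: euler_op_def)
    also have "\<dots> = w i * det_nat N (\<lambda>a b. if a = i then ?e b ^ j * (?e b * w i powr (?e b - 1))
                                          else w a powr ?e b)"
      using partial_det_nat_powr_row[OF assms(1) pos Suc.IH] by simp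
    also have "\<dots> = det_nat N (\<lambda>a b. if a = i then ?e b ^ Suc j * w i powr ?e b else w a powr ?e b)"
      unfolding det_nat_scale_row[OF assms(1)]
    proof (rule det_nat_cong)
      fix a b
      have "0 < w i" using pos assms(1) by simp
      then have "w i * w i powr (?e b - 1) = w i powr ?e b"
        using powr_mult_base[of "w i" "?e b - 1"] by simp
      then show "(if a = i then w i * (?e b ^ j * (?e b * w i powr (?e b - 1))) else w a powr ?e b) =
          (if a = i then ?e b ^ Suc j * w i powr ?e b else w a powr ?e b)"
        by (simp add: algebra_simps)
    qed
    finally show "(euler_op i ^^ Suc j) G w =
        det_nat N (\<lambda>a b. if a = i then ?e b ^ Suc j * w i powr ?e b else w a powr ?e b)" .
  qed
qed

lemma D_op_schur:
  assumes pos: "\<forall>a<N. 0 < u a" and "1 \<le> k"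
  shows "D_op N q k (schur N lam) u =
    (\<Sum>b<N. det_nat N (\<lambda>a c. (if c = b then schur_exp N lam c ^ k else 1) *
       u a powr (if c = b then schur_exp N lam c - q else schur_exp N lam c)) / vdm N u)"
proof -
  let ?e = "schur_exp N lam"
  have row: "u i powr (1 - q) * partial i ((euler_op i ^^ (k - 1)) (\<lambda>v. vdm N v * schur N lam v)) u =
      det_nat N (\<lambda>a c. if a = i then ?e c ^ k * u a powr (?e c - q) else u a powr ?e c)"
    if i: "i < N" for i
  proof -
    have "partial i ((euler_op i ^^ (k - 1)) (\<lambda>v. vdm N v * schur N lam v)) u =
        det_nat N (\<lambda>a c. if a = i then ?e c ^ (k - 1) * (?e c * u i powr (?e c - 1)) else u a powr ?e c)"
      by (intro partial_det_nat_powr_row[OF i pos] euler_op_iter_alternant[OF i]) (simp add: vdm_mult_schur)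
    moreover have "u i powr (1 - q) * (?e c ^ (k - 1) * (?e c * u i powr (?e c - 1))) =
        ?e c ^ k * u i powr (?e c - q)" for c
    proof -
      have "u i powr (1 - q) * u i powr (?e c - 1) = u i powr (?e c - q)"
        by (simp add: powr_add[symmetric])
      moreover have "?e c ^ (k - 1) * ?e c = ?e c ^ k"
        using \<open>1 \<le> k\<close> by (simp add: power_eq_if)
      ultimately show ?thesis by (metis mult.assoc mult.commute)
    qed
    ultimately show ?thesis
      by (simp add: det_nat_scale_row[OF i] cong: if_cong)
  qed
  have "D_op N q k (schur N lam) u = (\<Sum>b<N. det_nat N
      (\<lambda>a c. if c = b then ?e c ^ k * u a powr (?e c - q) else u a powr ?e c)) / vdm N u"
    unfolding D_op_def using row sum_det_nat_replace_rows_eq_cols by simp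
  also have "\<dots> = (\<Sum>b<N. det_nat N (\<lambda>a c. (if c = b then ?e c ^ k else 1) *
       u a powr (if c = b then ?e c - q else ?e c)) / vdm N u)"
    by (simp add: sum_divide_distrib if_distrib if_distribR cong: if_cong)
  finally show ?thesis .
qed

section \<open>Lagrange interpolation and the limiting determinants\<close>

definition lagrange_basis :: "nat \<Rightarrow> (nat \<Rightarrow> real) \<Rightarrow> nat \<Rightarrow> real \<Rightarrow> real" where
  "lagrange_basis N e c y = (\<Prod>j\<in>{..<N} - {c}. (y - e j) / (e c - e j))"

lemma lagrange_basis_node:
  assumes "inj_on e {..<N}" and "c < N" and "d < N"
  shows "lagrange_basis N e c (e d) = (if c = d then 1 else 0)"
proof (cases "c = d")
  case True
  have "(e d - e j) / (e c - e j) = 1" if "j \<in> {..<N} - {c}" for j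
    using assms that True unfolding inj_on_def by auto
  then show ?thesis using True by (simp add: lagrange_basis_def)
next
  case False
  then show ?thesis using assms(3) by (auto simp: lagrange_basis_def intro: prod_zero)
qed

lemma lagrange_interpolation:
  fixes p :: "real poly"
  assumes inj: "inj_on e {..<N}" and "degree p < N"
  shows "poly p y = (\<Sum>c<N. lagrange_basis N e c y * poly p (e c))"
proof -
  define Q where "Q = (\<Sum>c<N. Polynomial.smult (poly p (e c) / (\<Prod>j\<in>{..<N} - {c}. e c - e j))
                               (\<Prod>j\<in>{..<N} - {c}. [:-e j, 1:]))"
  have poly_Q: "poly Q y = (\<Sum>c<N. lagrange_basis N e c y * poly p (e c))" for y
    unfolding Q_def lagrange_basis_def poly_sum
    by (rule sum.cong) (simp_all add: poly_prod prod_dividef)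
  have degree_Q: "degree Q \<le> N - 1"
    unfolding Q_def
  proof (rule degree_sum_le)
    fix c
    assume "c \<in> {..<N}"
    then have "degree (\<Prod>j\<in>{..<N} - {c}. [:-e j, 1:]) = N - 1"
      by (simp add: degree_prod_linear)
    then show "degree (Polynomial.smult (poly p (e c) / (\<Prod>j\<in>{..<N} - {c}. e c - e j))
        (\<Prod>j\<in>{..<N} - {c}. [:-e j, 1:])) \<le> N - 1"
      by (metis degree_smult_le)
  qed simp
  have nodes: "poly p (e d) = poly Q (e d)" if "d < N" for d
  proof -
    have "poly Q (e d) = (\<Sum>c<N. if c = d then poly p (e c) else 0)"
      unfolding poly_Q by (rule sum.cong) (simp_all add: lagrange_basis_node[OF inj _ that])
    then show ?thesis using that by simp
  qed
  have "p = Q"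
  proof (rule poly_eqI_degree[of "e ` {..<N}"])
    show "poly p x = poly Q x" if "x \<in> e ` {..<N}" for x
      using that nodes by blast
  qed (use degree_Q assms(2) in \<open>simp_all add: card_image[OF inj]\<close>)
  then have "poly p y = poly Q y" by simp
  then show ?thesis by (simp only: poly_Q)
qed

lemma det_nat_replace_col_poly:
  assumes inj: "inj_on e {..<N}" and "b < N" and "\<And>a. a < N \<Longrightarrow> degree (P a) < N"
  shows "det_nat N (\<lambda>a c. if c = b then \<gamma> * poly (P a) y else poly (P a) (e c)) =
    \<gamma> * lagrange_basis N e b y * det_nat N (\<lambda>a c. poly (P a) (e c))"
proof -
  have "det_nat N (\<lambda>a c. if c = b then \<gamma> * poly (P a) y else poly (P a) (e c)) =
      det_nat N (\<lambda>a c. if c = b then \<Sum>c<N. (\<gamma> * lagrange_basis N e c y) * poly (P a) (e c)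
                        else poly (P a) (e c))"
  proof (rule det_nat_cong)
    fix a c
    assume "a < N"
    have "\<gamma> * poly (P a) y = (\<Sum>c<N. (\<gamma> * lagrange_basis N e c y) * poly (P a) (e c))"
      unfolding lagrange_interpolation[OF inj assms(3)[OF \<open>a < N\<close>], of y] sum_distrib_left
      by (simp only: mult.assoc)
    then show "(if c = b then \<gamma> * poly (P a) y else poly (P a) (e c)) =
        (if c = b then \<Sum>c<N. (\<gamma> * lagrange_basis N e c y) * poly (P a) (e c) else poly (P a) (e c))"
      by (simp only:)
  qed
  also have "\<dots> = \<gamma> * lagrange_basis N e b y * det_nat N (\<lambda>a c. poly (P a) (e c))"
    by (rule det_nat_replace_col_lincomb[OF assms(2)])
  finally show ?thesis .
qed

text \<open>In the basis of divided differences the matrix \<open>(falling_fact (e c) a / fact a)\<close> becomes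
  triangular with diagonal entries \<open>1 / fact a\<close>.\<close>

lemma det_falling_fact_nonzero:
  assumes inj: "inj_on e {..<N}"
  shows "det_nat N (\<lambda>a c. falling_fact (e c) a / fact a) \<noteq> 0"
proof -
  define P where "P a = Polynomial.smult (1 / fact a) (falling_fact_poly a)" for a
  have P: "falling_fact y a / fact a = poly (P a) y" for a y
    by (simp add: P_def poly_falling_fact_poly)
  have divdiff_P: "divdiff (poly (P a)) e c (e c) = (if a = c then 1 / fact a else 0)"
    if "a \<le> c" "c < N" for a c
  proof -
    have "inj_on e {..c}" using inj that by (auto intro: inj_on_subset)
    moreover have "degree (P a) \<le> c"
      using that by (simp add: P_def degree_falling_fact_poly)
    ultimately show ?thesis
      using that by (auto simp: divdiff_poly P_def degree_falling_fact_poly coeff_falling_fact_poly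
          intro: coeff_eq_0)
  qed
  have "det_nat N (\<lambda>a c. falling_fact (e c) a / fact a) =
      (\<Prod>c<N. \<Prod>m<c. e c - e m) * det_nat N (\<lambda>c a. divdiff (poly (P a)) e c (e c))"
    unfolding P det_nat_transpose[symmetric, of N "\<lambda>a c. poly (P a) (e c)"] by (rule det_nat_newton)
  also have "det_nat N (\<lambda>c a. divdiff (poly (P a)) e c (e c)) = (\<Prod>a<N. 1 / fact a)"
    unfolding det_nat_transpose[symmetric, of N "\<lambda>c a. divdiff (poly (P a)) e c (e c)"]
    by (subst det_nat_lower_triangular) (auto simp: divdiff_P)
  finally show ?thesis
    using vdm_nonzero[OF inj] by (simp add: prod_diff_eq_vdm vdm_sign_def)
qed

lemma det_falling_fact_replace_col:
  assumes "inj_on e {..<N}" and "b < N"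
  shows "det_nat N (\<lambda>a c. if c = b then \<gamma> * (falling_fact y a / fact a) else falling_fact (e c) a / fact a) =
    \<gamma> * lagrange_basis N e b y * det_nat N (\<lambda>a c. falling_fact (e c) a / fact a)"
proof -
  define P where "P a = Polynomial.smult (1 / fact a) (falling_fact_poly a)" for a
  have poly_P: "falling_fact y a / fact a = poly (P a) y" for a y
    by (simp add: P_def poly_falling_fact_poly)
  have "degree (P a) < N" if "a < N" for a
    using that by (simp add: P_def degree_falling_fact_poly)
  then show ?thesis
    unfolding poly_P by (rule det_nat_replace_col_poly[OF assms])
qed

section \<open>Limits at the point \<open>1^N\<close>\<close>

lemma gen_dom_pos: "u \<in> gen_dom N \<Longrightarrow> \<forall>a<N. 0 < u a"
  by (simp add: gen_dom_def)

lemma gen_dom_inj: "u \<in> gen_dom N \<Longrightarrow> inj_on u {..<N}"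
  by (auto simp: gen_dom_def inj_on_def)

lemma inj_on_schur_exp:
  assumes "is_signature N lam"
  shows "inj_on (schur_exp N lam) {..<N}"
proof -
  have decreasing: "schur_exp N lam j < schur_exp N lam i" if "i < j" "j < N" for i j
  proof -
    have "lam j \<le> lam i" using assms that unfolding is_signature_def by simp
    with \<open>i < j\<close> show ?thesis unfolding schur_exp_def by linarith
  qed
  show ?thesis
  proof (rule inj_onI)
    fix i j
    assume "i \<in> {..<N}" "j \<in> {..<N}" "schur_exp N lam i = schur_exp N lam j"
    then show "i = j"
      using decreasing[of i j] decreasing[of j i] by (cases i j rule: linorder_cases) auto
  qed
qed

lemma tendsto_schur:
  "((\<lambda>u. schur N lam u) \<longlongrightarrow>
     vdm_sign N * det_nat N (\<lambda>a c. falling_fact (schur_exp N lam c) a / fact a))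
     (at (\<lambda>_. 1) within gen_dom N)"
proof -
  have "det_nat N (\<lambda>a c. 1 * u a powr schur_exp N lam c) / vdm N u = schur N lam u"
    if "u \<in> gen_dom N" for u
    using vdm_mult_schur[OF gen_dom_pos[OF that]] vdm_nonzero[OF gen_dom_inj[OF that]]
    by (simp add: alternant_def field_simps)
  then have "eventually (\<lambda>u. det_nat N (\<lambda>a c. 1 * u a powr schur_exp N lam c) / vdm N u =
      schur N lam u) (at (\<lambda>_. 1) within gen_dom N)"
    by (auto simp: eventually_at_filter)
  with tendsto_alternant_quotient[of "gen_dom N" N "\<lambda>_. 1" "schur_exp N lam"] gen_dom_inj
  show ?thesis
    by (auto simp: powr_deriv_def elim: Lim_transform_eventually)
qed

lemma tendsto_D_op_schur:
  assumes "1 \<le> k" and "is_signature N lam"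
  shows "((\<lambda>u. D_op N q k (schur N lam) u) \<longlongrightarrow>
     vdm_sign N * det_nat N (\<lambda>a c. falling_fact (schur_exp N lam c) a / fact a) *
     (\<Sum>b<N. schur_exp N lam b ^ k * lagrange_basis N (schur_exp N lam) b (schur_exp N lam b - q)))
     (at (\<lambda>_. 1) within gen_dom N)"
proof -
  let ?e = "schur_exp N lam"
  define \<kappa> where "\<kappa> b c = (if c = b then ?e c ^ k else 1)" for b c
  define s where "s b c = (if c = b then ?e c - q else ?e c)" for b c
  have "eventually (\<lambda>u. (\<Sum>b<N. det_nat N (\<lambda>a c. \<kappa> b c * u a powr s b c) / vdm N u) =
      D_op N q k (schur N lam) u) (at (\<lambda>_. 1) within gen_dom N)"
    by (auto simp: eventually_at_filter D_op_schur[OF gen_dom_pos assms(1)] \<kappa>_def s_def)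
  moreover have "((\<lambda>u. \<Sum>b<N. det_nat N (\<lambda>a c. \<kappa> b c * u a powr s b c) / vdm N u) \<longlongrightarrow>
      (\<Sum>b<N. vdm_sign N * det_nat N (\<lambda>a c. powr_deriv (\<kappa> b c) (s b c) a 1 / fact a)))
      (at (\<lambda>_. 1) within gen_dom N)"
    by (intro tendsto_sum tendsto_alternant_quotient) (use gen_dom_inj in blast)
  moreover have "det_nat N (\<lambda>a c. powr_deriv (\<kappa> b c) (s b c) a 1 / fact a) =
      ?e b ^ k * lagrange_basis N ?e b (?e b - q) * det_nat N (\<lambda>a c. falling_fact (?e c) a / fact a)"
    if "b < N" for b
  proof -
    have "det_nat N (\<lambda>a c. powr_deriv (\<kappa> b c) (s b c) a 1 / fact a) =
        det_nat N (\<lambda>a c. if c = b then ?e b ^ k * (falling_fact (?e b - q) a / fact a)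
                          else falling_fact (?e c) a / fact a)"
      by (intro det_nat_cong) (simp add: powr_deriv_def \<kappa>_def s_def)
    then show ?thesis
      using det_falling_fact_replace_col[OF inj_on_schur_exp[OF assms(2)] that] by simp
  qed
  ultimately show ?thesis
    by (force simp: sum_distrib_left mult_ac elim: Lim_transform_eventually)
qed

lemma pp_moment_eq_lagrange:
  assumes "0 < N"
  shows "real N ^ (k + 1) * pp_moment N q lam k =
    (\<Sum>b<N. schur_exp N lam b ^ k * lagrange_basis N (schur_exp N lam) b (schur_exp N lam b - q))"
proof -
  have weight: "pp_weight N q lam b = lagrange_basis N (schur_exp N lam) b (schur_exp N lam b - q)" for b
    unfolding pp_weight_def lagrange_basis_def
    by (intro prod.cong) (auto simp: schur_exp_def algebra_simps)
  have atom: "real N ^ k * pp_atom N lam b ^ k = schur_exp N lam b ^ k" for b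
    using assms by (simp add: pp_atom_def schur_exp_def power_divide)
  have "real N ^ (k + 1) * pp_moment N q lam k =
      (\<Sum>b<N. (real N ^ k * pp_atom N lam b ^ k) * pp_weight N q lam b)"
    using assms by (simp add: pp_moment_def sum_distrib_left mult_ac)
  then show ?thesis by (simp only: weight atom)
qed

theorem mainTheorem5:
  fixes N k :: nat and q :: real and lam :: "nat \<Rightarrow> int"
  assumes "0 < N" and "-1 \<le> q" and "q \<le> 1" and "1 \<le> k"
    and "is_signature N lam"
  shows "\<exists>c d. ((\<lambda>u. schur N lam u) \<longlongrightarrow> c) (at (\<lambda>_. 1) within gen_dom N) \<and> c \<noteq> 0 \<and>
           ((\<lambda>u. D_op N q k (schur N lam) u) \<longlongrightarrow> d) (at (\<lambda>_. 1) within gen_dom N) \<and>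
           d / c = real N ^ (k + 1) * pp_moment N q lam k"
proof -
  define c where "c = vdm_sign N * det_nat N (\<lambda>a c. falling_fact (schur_exp N lam c) a / fact a)"
  have "c \<noteq> 0"
    using vdm_sign_square[of N] det_falling_fact_nonzero[OF inj_on_schur_exp[OF assms(5)]]
    by (auto simp: c_def)
  with tendsto_schur[of N lam] tendsto_D_op_schur[OF assms(4,5), of q] pp_moment_eq_lagrange[OF assms(1)]
  show ?thesis
    unfolding c_def[symmetric] by (intro exI conjI) auto
qed

end
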